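(* Let $G$ be a $\lambda$-graph and $Q$ a query over $G$. Then $Q^{\Downarrow}$ is an open bisimulation if and only if $Q^{\#}$ is a sharing equivalence.
   Context: A pre-$\lambda$-graph is a directed graph whose nodes are of four kinds: an application node $@(n_1,n_2)$ has exactly two children, its left child $n_1$ and its right child $n_2$; an abstraction node $\lambda(n)$ has exactly one child, its body $n$; a free variable node has no children and carries an atom $\mathrm{id}(n)$ from a fixed set of atoms, distinct free variable nodes carrying distinct atoms; a bound variable node $\mathrm{var}(l)$ has exactly one outgoing binding edge, to an abstraction node $l$ (its binder). A trace is a finite sequence of directions from $\{\swarrow,\downarrow,\searrow\}$; $\epsilon$ is the empty trace and $d\cdot\tau$ is the trace $\tau$ extended by one final step $d$. Paths $n\xrightarrow{\tau}m$ are defined inductively: $n\xrightarrow{\epsilon}n$; if $n\xrightarrow{\tau}\lambda(m)$ then $n\xrightarrow{\downarrow\cdot\tau}m$; if $n\xrightarrow{\tau}@(m_1,m_2)$ then $n\xrightarrow{\swarrow\cdot\tau}m_1$ and $n\xrightarrow{\searrow\cdot\tau}m_2$ (binding edges are never followed). The path $n\xrightarrow{\tau}$ crosses a node $m$ if either $n\xrightarrow{\tau}m$, or $\tau=d\cdot\tau'$ and $n\xrightarrow{\tau'}$ crosses $m$. A root is a node $r$ such that the only path ending in $r$ has the empty trace. A node $m$ dominates $n$ if every path from a root to $n$ crosses $m$. A $\lambda$-graph is a pre-$\lambda$-graph that has finitely many nodes, is acyclic ($n\xrightarrow{\tau}n$ holds only for $\tau=\epsilon$), and is dominated (every bound variable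 node $\mathrm{var}(l)$ is dominated by its binder $l$). Two nodes are homogeneous if both are application nodes, or both abstraction nodes, or both free variable nodes, or both bound variable nodes; a binary relation $R$ on nodes is homogeneous if it only relates homogeneous nodes. Rules: $(\swarrow)$: $@(n_1,n_2)\,R\,@(m_1,m_2)$ implies $n_1\,R\,m_1$; $(\searrow)$: $@(n_1,n_2)\,R\,@(m_1,m_2)$ implies $n_2\,R\,m_2$; $(\downarrow)$: $\lambda(n)\,R\,\lambda(m)$ implies $n\,R\,m$; $(\circlearrowright)$: $\mathrm{var}(n)\,R\,\mathrm{var}(m)$ implies $n\,R\,m$. $R$ is propagated if closed under $(\swarrow),(\downarrow),(\searrow)$. $R$ is open if $n\,R\,m$ implies $n=m$ for all free variable nodes $n,m$. A bisimulation is a homogeneous propagated relation closed also under $(\circlearrowright)$. A sharing equivalence is an open bisimulation that is an equivalence relation. $R^{\Downarrow}$ (propagation) is the smallest propagated relation containing $R$; $R^{\#}$ (spreading) is the smallest propagated equivalence relation containing $R$. A query over $G$ is a binary relation on the roots of $G$. *)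

theory Defs
  imports Main
begin

text \<open>Node kinds of a pre-lambda-graph. A graph on node type 'n with atoms 'a is a
labelling function G :: 'n \<Rightarrow> ('n,'a) node; the nodes of the graph are all elements
of type 'n.\<close>

datatype ('n, 'a) node = App 'n 'n | Abs 'n | FVar 'a | BVar 'n

datatype dir = DLeft | DDown | DRight

text \<open>Traces: lists of directions; the head of the list is the final step,
so d # tau is the trace tau extended by the final step d.\<close>

inductive path :: "('n \<Rightarrow> ('n,'a) node) \<Rightarrow> 'n \<Rightarrow> dir list \<Rightarrow> 'n \<Rightarrow> bool"
  for G where
  path_nil: "path G n [] n"
| path_abs: "path G n \<tau> m \<Longrightarrow> G m = Abs m' \<Longrightarrow> path G n (DDown # \<tau>) m'"
| path_left: "path G n \<tau> m \<Longrightarrow> G m = App m1 m2 \<Longrightarrow> path G n (DLeft # \<tau>) m1"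
| path_right: "path G n \<tau> m \<Longrightarrow> G m = App m1 m2 \<Longrightarrow> path G n (DRight # \<tau>) m2"

fun crosses :: "('n \<Rightarrow> ('n,'a) node) \<Rightarrow> 'n \<Rightarrow> dir list \<Rightarrow> 'n \<Rightarrow> bool" where
  "crosses G n [] m = path G n [] m"
| "crosses G n (d # \<tau>) m = (path G n (d # \<tau>) m \<or> crosses G n \<tau> m)"

definition is_root :: "('n \<Rightarrow> ('n,'a) node) \<Rightarrow> 'n \<Rightarrow> bool" where
  "is_root G r \<longleftrightarrow> (\<forall>n \<tau>. path G n \<tau> r \<longrightarrow> \<tau> = [])"

definition dominates :: "('n \<Rightarrow> ('n,'a) node) \<Rightarrow> 'n \<Rightarrow> 'n \<Rightarrow> bool" where
  "dominates G m n \<longleftrightarrow> (\<forall>r \<tau>. is_root G r \<and> path G r \<tau> n \<longrightarrow> crosses G r \<tau> m)"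

definition pre_lambda_graph :: "('n \<Rightarrow> ('n,'a) node) \<Rightarrow> bool" where
  "pre_lambda_graph G \<longleftrightarrow>
     (\<forall>v l. G v = BVar l \<longrightarrow> (\<exists>b. G l = Abs b)) \<and>
     (\<forall>n m a. G n = FVar a \<and> G m = FVar a \<longrightarrow> n = m)"

definition lambda_graph :: "('n \<Rightarrow> ('n,'a) node) \<Rightarrow> bool" where
  "lambda_graph G \<longleftrightarrow> pre_lambda_graph G \<and> finite (UNIV :: 'n set) \<and>
     (\<forall>n \<tau>. path G n \<tau> n \<longrightarrow> \<tau> = []) \<and>
     (\<forall>v l. G v = BVar l \<longrightarrow> dominates G l v)"

fun same_kind :: "('n,'a) node \<Rightarrow> ('n,'a) node \<Rightarrow> bool" where
  "same_kind (App _ _) (App _ _) = True"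
| "same_kind (Abs _) (Abs _) = True"
| "same_kind (FVar _) (FVar _) = True"
| "same_kind (BVar _) (BVar _) = True"
| "same_kind _ _ = False"

definition homogeneous :: "('n \<Rightarrow> ('n,'a) node) \<Rightarrow> 'n rel \<Rightarrow> bool" where
  "homogeneous G R \<longleftrightarrow> (\<forall>n m. (n, m) \<in> R \<longrightarrow> same_kind (G n) (G m))"

definition propagated :: "('n \<Rightarrow> ('n,'a) node) \<Rightarrow> 'n rel \<Rightarrow> bool" where
  "propagated G R \<longleftrightarrow>
     (\<forall>n m n1 n2 m1 m2. (n, m) \<in> R \<and> G n = App n1 n2 \<and> G m = App m1 m2 \<longrightarrow> (n1, m1) \<in> R) \<and>
     (\<forall>n m n' m'. (n, m) \<in> R \<and> G n = Abs n' \<and> G m = Abs m' \<longrightarrow> (n', m') \<in> R) \<and>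
     (\<forall>n m n1 n2 m1 m2. (n, m) \<in> R \<and> G n = App n1 n2 \<and> G m = App m1 m2 \<longrightarrow> (n2, m2) \<in> R)"

definition var_closed :: "('n \<Rightarrow> ('n,'a) node) \<Rightarrow> 'n rel \<Rightarrow> bool" where
  "var_closed G R \<longleftrightarrow> (\<forall>n m l l'. (n, m) \<in> R \<and> G n = BVar l \<and> G m = BVar l' \<longrightarrow> (l, l') \<in> R)"

definition open_rel :: "('n \<Rightarrow> ('n,'a) node) \<Rightarrow> 'n rel \<Rightarrow> bool" where
  "open_rel G R \<longleftrightarrow> (\<forall>n m a b. (n, m) \<in> R \<and> G n = FVar a \<and> G m = FVar b \<longrightarrow> n = m)"

definition bisimulation :: "('n \<Rightarrow> ('n,'a) node) \<Rightarrow> 'n rel \<Rightarrow> bool" where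
  "bisimulation G R \<longleftrightarrow> homogeneous G R \<and> propagated G R \<and> var_closed G R"

definition sharing_equivalence :: "('n \<Rightarrow> ('n,'a) node) \<Rightarrow> 'n rel \<Rightarrow> bool" where
  "sharing_equivalence G R \<longleftrightarrow> open_rel G R \<and> bisimulation G R \<and> equiv UNIV R"

definition propagation :: "('n \<Rightarrow> ('n,'a) node) \<Rightarrow> 'n rel \<Rightarrow> 'n rel" where
  "propagation G R = \<Inter>{S. R \<subseteq> S \<and> propagated G S}"

definition spreading :: "('n \<Rightarrow> ('n,'a) node) \<Rightarrow> 'n rel \<Rightarrow> 'n rel" where
  "spreading G R = \<Inter>{S. R \<subseteq> S \<and> propagated G S \<and> equiv UNIV S}"

definition is_query :: "('n \<Rightarrow> ('n,'a) node) \<Rightarrow> 'n rel \<Rightarrow> bool" where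
  "is_query G Q \<longleftrightarrow> (\<forall>r s. (r, s) \<in> Q \<longrightarrow> is_root G r \<and> is_root G s)"

end

theory Submission
  imports Defs
begin

text \<open>
  Open bisimulations are exactly the post-fixed points R \<subseteq> F R of the monotone operator F = open_bisim_step G
  that commutes with converse and satisfies F R O F S \<subseteq> F (R O S). Hence if Q\<Down> is an open
  bisimulation, so is its equivalence closure E; and E, a propagated equivalence squeezed between
  Q\<Down> and Q#, is Q#.

  Conversely Q\<Down> \<subseteq> Q# inherits openness and homogeneity, and the real content is closure under
  binding edges. Q\<Down> relates exactly the nodes reached by a common trace from two related roots.
  By domination, the binders l, l' of two related bound variables lie on these two paths, say at
  depths i and j; let a be the node at depth i on the second path, so that (l, a) \<in> Q\<Down>. Then
  (a, l') \<in> Q#, and in a finite acyclic graph a homogeneous propagated relation never relates a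
  node to a proper descendant (it would simulate the descent forever), so a = l'.
\<close>

lemma path_Nil_iff [simp]: "path G n [] m \<longleftrightarrow> m = n"
  by (auto elim: path.cases intro: path_nil)

lemma path_Cons_iff [simp]:
  "path G n (d # \<tau>) m \<longleftrightarrow> (\<exists>p. path G n \<tau> p \<and>
     (d = DDown \<and> G p = Abs m \<or> d = DLeft \<and> (\<exists>m2. G p = App m m2) \<or> d = DRight \<and> (\<exists>m1. G p = App m1 m)))"
  by (subst path.simps) fastforce

lemma path_deterministic: "path G n \<tau> m \<Longrightarrow> path G n \<tau> m' \<Longrightarrow> m = m'"
  by (induction \<tau> arbitrary: m m') fastforce+

lemma path_append_iff: "path G n (\<sigma> @ \<rho>) m \<longleftrightarrow> (\<exists>p. path G n \<rho> p \<and> path G p \<sigma> m)"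
  by (induction \<sigma> arbitrary: m) auto

lemma path_append: "path G b \<rho> c \<Longrightarrow> path G a \<sigma> b \<Longrightarrow> path G a (\<rho> @ \<sigma>) c"
  by (subst path_append_iff) blast

lemma path_drop_take:
  assumes "path G n \<tau> m"
  obtains p where "path G n (drop k \<tau>) p" and "path G p (take k \<tau>) m"
  using assms that path_append_iff[of G n "take k \<tau>" "drop k \<tau>" m] by auto

lemma crosses_path_drop:
  "crosses G n \<tau> m \<Longrightarrow> \<exists>k. path G n (drop k \<tau>) m"
proof (induction \<tau>)
  case (Cons d \<tau>)
  then show ?case
    by (cases "path G n (d # \<tau>) m") (auto intro: exI[of _ 0] exI[of _ "Suc _"] simp del: path_Cons_iff)
qed simp

definition proper_descendant :: "('n \<Rightarrow> ('n,'a) node) \<Rightarrow> 'n rel" where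
  "proper_descendant G = {(y, x). \<exists>\<sigma>. \<sigma> \<noteq> [] \<and> path G x \<sigma> y}"

lemma wf_proper_descendant:
  assumes "finite (UNIV :: 'n set)" and "\<forall>n \<tau>. path G n \<tau> n \<longrightarrow> \<tau> = []"
  shows "wf (proper_descendant G :: 'n rel)"
proof (rule finite_acyclic_wf)
  show "finite (proper_descendant G)"
    using assms(1) by (simp add: finite_subset[OF subset_UNIV] finite_prod)
  have "trans (proper_descendant G)"
    unfolding proper_descendant_def by (rule transI) (auto dest: path_append)
  then show "acyclic (proper_descendant G)"
    using assms(2) by (auto simp: acyclic_def proper_descendant_def)
qed

lemma propagatedI:
  assumes "\<And>n m n1 n2 m1 m2. (n, m) \<in> S \<Longrightarrow> G n = App n1 n2 \<Longrightarrow> G m = App m1 m2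
             \<Longrightarrow> (n1, m1) \<in> S \<and> (n2, m2) \<in> S"
    and "\<And>n m n' m'. (n, m) \<in> S \<Longrightarrow> G n = Abs n' \<Longrightarrow> G m = Abs m' \<Longrightarrow> (n', m') \<in> S"
  shows "propagated G S"
  unfolding propagated_def using assms by blast

lemma propagatedD:
  assumes "propagated G S" and "(n, m) \<in> S"
  shows "G n = App n1 n2 \<Longrightarrow> G m = App m1 m2 \<Longrightarrow> (n1, m1) \<in> S \<and> (n2, m2) \<in> S"
    and "G n = Abs n' \<Longrightarrow> G m = Abs m' \<Longrightarrow> (n', m') \<in> S"
  using assms unfolding propagated_def by blast+

lemma propagated_Inter: "(\<And>S. S \<in> F \<Longrightarrow> propagated G S) \<Longrightarrow> propagated G (\<Inter>F)"
  by (rule propagatedI) (blast dest: propagatedD)+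

lemma propagated_path:
  assumes "propagated G R" and "(r, s) \<in> R"
  shows "path G r \<tau> n \<Longrightarrow> path G s \<tau> m \<Longrightarrow> (n, m) \<in> R"
proof (induction \<tau> arbitrary: n m)
  case (Cons d \<tau>)
  from Cons.prems obtain p q where "path G r \<tau> p" "path G s \<tau> q"
    and "d = DDown \<and> G p = Abs n \<or> d = DLeft \<and> (\<exists>n2. G p = App n n2) \<or> d = DRight \<and> (\<exists>n1. G p = App n1 n)"
    and "d = DDown \<and> G q = Abs m \<or> d = DLeft \<and> (\<exists>m2. G q = App m m2) \<or> d = DRight \<and> (\<exists>m1. G q = App m1 m)"
    by auto
  moreover from calculation(1,2) have "(p, q) \<in> R" by (rule Cons.IH)
  ultimately show ?case
    using propagatedD[OF assms(1)] by (cases d) blast+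
qed (use assms(2) in simp)

lemma homogeneous_propagated_path:
  assumes "homogeneous G S" and "propagated G S" and "(x, y) \<in> S"
  shows "path G x \<sigma> z \<Longrightarrow> \<exists>w. path G y \<sigma> w \<and> (z, w) \<in> S"
proof (induction \<sigma> arbitrary: z)
  case (Cons d \<sigma>)
  from Cons.prems obtain p where p: "path G x \<sigma> p" and edge:
    "d = DDown \<and> G p = Abs z \<or> d = DLeft \<and> (\<exists>m2. G p = App z m2) \<or> d = DRight \<and> (\<exists>m1. G p = App m1 z)"
    by auto
  from Cons.IH[OF p] obtain w0 where w0: "path G y \<sigma> w0" "(p, w0) \<in> S" by blast
  with assms(1) have "same_kind (G p) (G w0)" unfolding homogeneous_def by blast
  with edge w0 show ?case
    using propagatedD[OF assms(2) w0(2)] by (cases "G w0") auto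
qed (use assms(3) in simp)

lemma homogeneous_propagated_no_descendant:
  assumes "homogeneous G S" and "propagated G S"
    and "finite (UNIV :: 'n set)" and "\<forall>n \<tau>. path G n \<tau> n \<longrightarrow> \<tau> = []"
    and "(x, y) \<in> S" and "path G x \<sigma> (y :: 'n)"
  shows "\<sigma> = []"
proof (rule ccontr)
  assume "\<sigma> \<noteq> []"
  define X where "X = {u. \<exists>v. (u, v) \<in> S \<and> path G u \<sigma> v}"
  have "x \<in> X" using assms(5,6) by (auto simp: X_def)
  then obtain u where "u \<in> X"
    and minimal: "\<And>u'. (u', u) \<in> proper_descendant G \<Longrightarrow> u' \<notin> X"
    using wfE_min[OF wf_proper_descendant[OF assms(3,4)]] by blast
  then obtain v where v: "(u, v) \<in> S" "path G u \<sigma> v" by (auto simp: X_def)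
  then obtain w where "(v, w) \<in> S" "path G v \<sigma> w"
    using homogeneous_propagated_path[OF assms(1,2)] by blast
  then have "v \<in> X" by (auto simp: X_def)
  moreover have "(v, u) \<in> proper_descendant G"
    using v(2) \<open>\<sigma> \<noteq> []\<close> by (auto simp: proper_descendant_def)
  ultimately show False using minimal by blast
qed

lemma homogeneous_propagated_path_drop_eq:
  assumes "homogeneous G S" and "propagated G S" and "sym S"
    and "finite (UNIV :: 'n set)" and "\<forall>n \<tau>. path G n \<tau> n \<longrightarrow> \<tau> = []"
  shows "path G s (drop i \<tau>) a \<Longrightarrow> path G s (drop j \<tau>) b \<Longrightarrow> (a, b) \<in> S \<Longrightarrow> a = (b :: 'n)"
proof (induction i j arbitrary: a b rule: linorder_wlog)
  case (le i j)
  have "drop j \<tau> = drop (j - i) (drop i \<tau>)" using le.hyps by simp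
  with le.prems path_drop_take[OF le.prems(1), of "j - i"] path_deterministic
  have "path G b (take (j - i) (drop i \<tau>)) a" by metis
  moreover have "(b, a) \<in> S" using le.prems(3) assms(3) by (auto dest: symD)
  ultimately have "path G b [] a"
    using homogeneous_propagated_no_descendant[OF assms(1,2,4,5)] by metis
  then show "a = b" by simp
next
  case (sym i j)
  then show ?case using assms(3) by (metis symD)
qed

lemma propagated_propagation: "propagated G (propagation G Q)"
  unfolding propagation_def by (rule propagated_Inter) simp

lemma propagation_least: "Q \<subseteq> S \<Longrightarrow> propagated G S \<Longrightarrow> propagation G Q \<subseteq> S"
  unfolding propagation_def by blast

lemma subset_propagation: "Q \<subseteq> propagation G Q"
  unfolding propagation_def by blast

definition trace_related :: "('n \<Rightarrow> ('n,'a) node) \<Rightarrow> 'n rel \<Rightarrow> 'n rel" where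
  "trace_related G Q = {(n, m). \<exists>r s \<tau>. (r, s) \<in> Q \<and> path G r \<tau> n \<and> path G s \<tau> m}"

lemma propagation_eq_trace_related: "propagation G Q = trace_related G Q"
proof
  have "propagated G (trace_related G Q)"
    unfolding trace_related_def by (rule propagatedI) (blast intro: path.intros)+
  moreover have "Q \<subseteq> trace_related G Q"
    by (auto simp: trace_related_def intro: path_nil)
  ultimately show "propagation G Q \<subseteq> trace_related G Q"
    by (rule propagation_least[rotated])
  show "trace_related G Q \<subseteq> propagation G Q"
    using propagated_path[OF propagated_propagation] subset_propagation
    by (fastforce simp: trace_related_def)
qed

lemma propagated_spreading: "propagated G (spreading G Q)"
  unfolding spreading_def by (rule propagated_Inter) simp

lemma equiv_spreading: "equiv UNIV (spreading G Q)"
proof (rule equivI)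
  show "refl (spreading G Q)"
    by (rule refl_onI) (auto simp: spreading_def equiv_def refl_on_def)
  show "sym (spreading G Q)"
    by (rule symI) (auto simp: spreading_def equiv_def dest: symD)
  show "trans (spreading G Q)"
    by (rule transI) (auto simp: spreading_def equiv_def dest: transD)
qed simp

lemma spreading_least: "Q \<subseteq> S \<Longrightarrow> propagated G S \<Longrightarrow> equiv UNIV S \<Longrightarrow> spreading G Q \<subseteq> S"
  unfolding spreading_def by blast

lemma propagation_subset_spreading: "propagation G Q \<subseteq> spreading G Q"
  by (rule propagation_least[OF _ propagated_spreading]) (auto simp: spreading_def)

lemma equiv_closure_least:
  assumes "equiv UNIV S" and "R \<subseteq> S"
  shows "(R \<union> R\<inverse>)\<^sup>* \<subseteq> S"
proof (rule subrelI)
  fix x y assume "(x, y) \<in> (R \<union> R\<inverse>)\<^sup>*"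
  then show "(x, y) \<in> S"
    by (induction rule: rtrancl_induct)
      (use assms in \<open>auto simp: equiv_def refl_on_def dest: symD transD\<close>)
qed

definition open_bisim_step :: "('n \<Rightarrow> ('n,'a) node) \<Rightarrow> 'n rel \<Rightarrow> 'n rel" where
  "open_bisim_step G R = {(x, y).
       (\<exists>x1 x2 y1 y2. G x = App x1 x2 \<and> G y = App y1 y2 \<and> (x1, y1) \<in> R \<and> (x2, y2) \<in> R)
     \<or> (\<exists>x' y'. G x = Abs x' \<and> G y = Abs y' \<and> (x', y') \<in> R)
     \<or> (\<exists>a b. G x = FVar a \<and> G y = FVar b \<and> x = y)
     \<or> (\<exists>l l'. G x = BVar l \<and> G y = BVar l' \<and> (l, l') \<in> R)}"

lemma open_bisimulation_subset_open_bisim_step: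
  assumes "open_rel G R" and "bisimulation G R"
  shows "R \<subseteq> open_bisim_step G R"
proof (rule subrelI)
  fix x y assume xy: "(x, y) \<in> R"
  have kind: "same_kind (G x) (G y)" and propag: "propagated G R" and var: "var_closed G R"
    using assms(2) xy by (auto simp: bisimulation_def homogeneous_def)
  show "(x, y) \<in> open_bisim_step G R"
  proof (cases "G x")
    case (App x1 x2)
    moreover from App kind obtain y1 y2 where "G y = App y1 y2" by (cases "G y") auto
    moreover from calculation have "(x1, y1) \<in> R" "(x2, y2) \<in> R"
      using propag xy unfolding propagated_def by blast+
    ultimately show ?thesis by (simp add: open_bisim_step_def)
  next
    case (Abs x')
    moreover from Abs kind obtain y' where "G y = Abs y'" by (cases "G y") auto
    moreover from calculation have "(x', y') \<in> R"
      using propag xy unfolding propagated_def by blast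
    ultimately show ?thesis by (simp add: open_bisim_step_def)
  next
    case (FVar a)
    moreover from FVar kind obtain b where "G y = FVar b" by (cases "G y") auto
    moreover from calculation have "x = y"
      using assms(1) xy unfolding open_rel_def by blast
    ultimately show ?thesis by (simp add: open_bisim_step_def)
  next
    case (BVar l)
    moreover from BVar kind obtain l' where "G y = BVar l'" by (cases "G y") auto
    moreover from calculation have "(l, l') \<in> R"
      using var xy unfolding var_closed_def by blast
    ultimately show ?thesis by (simp add: open_bisim_step_def)
  qed
qed

lemma open_bisimulation_if_subset_open_bisim_step:
  assumes "R \<subseteq> open_bisim_step G R"
  shows "open_rel G R" and "bisimulation G R"
proof -
  note step = subsetD[OF assms, unfolded open_bisim_step_def, simplified]
  have "homogeneous G R"
    unfolding homogeneous_def by (fastforce dest: step)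
  moreover have "propagated G R"
    unfolding propagated_def by (fastforce dest: step)
  moreover have "var_closed G R"
    unfolding var_closed_def by (fastforce dest: step)
  moreover have "open_rel G R"
    unfolding open_rel_def by (fastforce dest: step)
  ultimately show "open_rel G R" and "bisimulation G R"
    by (simp_all add: bisimulation_def)
qed

lemma open_bisim_step_mono: "R \<subseteq> S \<Longrightarrow> open_bisim_step G R \<subseteq> open_bisim_step G S"
  unfolding open_bisim_step_def by blast

lemma Id_subset_open_bisim_step:
  fixes G :: "'n \<Rightarrow> ('n,'a) node"
  shows "Id \<subseteq> open_bisim_step G Id"
proof (rule subrelI)
  fix x y :: 'n assume "(x, y) \<in> Id"
  then show "(x, y) \<in> open_bisim_step G Id"
    unfolding open_bisim_step_def by (cases "G x") auto
qed

lemma converse_open_bisim_step: "(open_bisim_step G R)\<inverse> = open_bisim_step G (R\<inverse>)"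
  unfolding open_bisim_step_def by blast

lemma relcomp_open_bisim_step:
  "open_bisim_step G R O open_bisim_step G S \<subseteq> open_bisim_step G (R O S)"
  unfolding open_bisim_step_def by auto

lemma open_bisimulation_equiv_closure:
  assumes "R \<subseteq> open_bisim_step G R"
  shows "(R \<union> R\<inverse>)\<^sup>* \<subseteq> open_bisim_step G ((R \<union> R\<inverse>)\<^sup>*)"
proof -
  let ?R = "R \<union> R\<inverse>"
  have "?R \<subseteq> open_bisim_step G ?R"
    using assms converse_open_bisim_step[of G R] open_bisim_step_mono[of R ?R G]
      open_bisim_step_mono[of "R\<inverse>" ?R G] by blast
  show ?thesis
  proof (rule subrelI)
    fix x z assume "(x, z) \<in> ?R\<^sup>*"
    then show "(x, z) \<in> open_bisim_step G (?R\<^sup>*)"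
    proof (induction rule: rtrancl_induct)
      case base
      then show ?case
        using Id_subset_open_bisim_step open_bisim_step_mono[of Id "?R\<^sup>*" G] by blast
    next
      case (step y z)
      then have "(x, z) \<in> open_bisim_step G (?R\<^sup>* O ?R)"
        using \<open>?R \<subseteq> open_bisim_step G ?R\<close> relcomp_open_bisim_step by blast
      moreover have "?R\<^sup>* O ?R \<subseteq> ?R\<^sup>*" by (auto intro: rtrancl_into_rtrancl)
      ultimately show ?case using open_bisim_step_mono by blast
    qed
  qed
qed

lemma sharing_equivalence_spreading_if_open_bisimulation:
  assumes "open_rel G (propagation G Q)" and "bisimulation G (propagation G Q)"
  shows "sharing_equivalence G (spreading G Q)"
proof -
  let ?P = "propagation G Q"
  let ?E = "(?P \<union> ?P\<inverse>)\<^sup>*"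
  from assms have "?P \<subseteq> open_bisim_step G ?P"
    by (rule open_bisimulation_subset_open_bisim_step)
  then have E_step: "?E \<subseteq> open_bisim_step G ?E"
    by (rule open_bisimulation_equiv_closure)
  have E_equiv: "equiv UNIV ?E"
    by (intro equivI refl_rtrancl trans_rtrancl sym_rtrancl sym_Un_converse) simp
  have E_bisim: "open_rel G ?E" "bisimulation G ?E"
    using open_bisimulation_if_subset_open_bisim_step[OF E_step] by auto
  then have "spreading G Q \<subseteq> ?E"
    using subset_propagation[of Q G] E_equiv
    by (intro spreading_least) (auto simp: bisimulation_def)
  moreover have "?E \<subseteq> spreading G Q"
    by (rule equiv_closure_least[OF equiv_spreading propagation_subset_spreading])
  ultimately have "spreading G Q = ?E" by blast
  with E_bisim E_equiv show ?thesis
    unfolding sharing_equivalence_def by simp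
qed

lemma var_closed_propagation:
  fixes G :: "'n \<Rightarrow> ('n, 'a) node"
  assumes "lambda_graph G" and "is_query G Q"
    and "homogeneous G S" and "propagated G S" and "var_closed G S" and "equiv UNIV S"
    and "propagation G Q \<subseteq> S"
  shows "var_closed G (propagation G Q)"
  unfolding var_closed_def
proof (intro allI impI, elim conjE)
  let ?P = "propagation G Q"
  have graph: "finite (UNIV :: 'n set)" "\<forall>n \<tau>. path G n \<tau> n \<longrightarrow> \<tau> = []"
    "\<forall>v l. G v = BVar l \<longrightarrow> dominates G l v"
    using assms(1) unfolding lambda_graph_def by auto
  fix v v' l l' assume vv': "(v, v') \<in> ?P" and v: "G v = BVar l" and v': "G v' = BVar l'"
  have ll': "(l, l') \<in> S"
    using assms(5,7) vv' v v' unfolding var_closed_def by blast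
  obtain r s \<tau> where rs: "(r, s) \<in> Q" and r: "path G r \<tau> v" and s: "path G s \<tau> v'"
    using vv' by (auto simp: propagation_eq_trace_related trace_related_def)
  have "is_root G r" "is_root G s" using assms(2) rs by (auto simp: is_query_def)
  then obtain i j where l: "path G r (drop i \<tau>) l" and l': "path G s (drop j \<tau>) l'"
    using graph(3) v v' r s crosses_path_drop by (metis dominates_def)
  obtain a where a: "path G s (drop i \<tau>) a"
    using path_drop_take[OF s] by metis
  have la: "(l, a) \<in> ?P"
    by (rule propagated_path[OF propagated_propagation subsetD[OF subset_propagation rs] l a])
  then have "(a, l') \<in> S"
    using assms(6,7) ll' unfolding equiv_def sym_def trans_def by blast
  then have "a = l'"
    using homogeneous_propagated_path_drop_eq[OF assms(3,4) _ graph(1,2) a l'] assms(6)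
    by (simp add: equiv_def)
  with la show "(l, l') \<in> ?P" by simp
qed

lemma open_bisimulation_if_sharing_equivalence_spreading:
  assumes "lambda_graph G" and "is_query G Q"
    and "sharing_equivalence G (spreading G Q)"
  shows "open_rel G (propagation G Q)" and "bisimulation G (propagation G Q)"
proof -
  let ?S = "spreading G Q" and ?P = "propagation G Q"
  have S: "homogeneous G ?S" "propagated G ?S" "var_closed G ?S" "equiv UNIV ?S" "open_rel G ?S"
    using assms(3) unfolding sharing_equivalence_def bisimulation_def by auto
  have PS: "?P \<subseteq> ?S" by (rule propagation_subset_spreading)
  show "open_rel G ?P"
    using S(5) PS unfolding open_rel_def by blast
  have "homogeneous G ?P"
    using S(1) PS unfolding homogeneous_def by blast
  with var_closed_propagation[OF assms(1,2) S(1-4) PS] show "bisimulation G ?P"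
    unfolding bisimulation_def using propagated_propagation by blast
qed

theorem mainTheorem15:
  fixes G :: "'n \<Rightarrow> ('n, 'a) node" and Q :: "'n rel"
  assumes "lambda_graph G" and "is_query G Q"
  shows "(open_rel G (propagation G Q) \<and> bisimulation G (propagation G Q))
           \<longleftrightarrow> sharing_equivalence G (spreading G Q)"
  using sharing_equivalence_spreading_if_open_bisimulation
    open_bisimulation_if_sharing_equivalence_spreading[OF assms] by blast

end
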